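(* Let $r \in \mathbb{Q}_{>0}$ be such that $S_r$ is atomic. Then: (1) if $r < 1$, then $\omega(1) = \infty$; (2) if $r \in \mathbb{N}$, then $\omega(1) = 1$; (3) if $r \in \mathbb{Q}_{>1} \setminus \mathbb{N}$, then $\omega(1) = \mathsf{d}(r)$.
   Context: For $q \in \mathbb{Q}_{>0}$, $\mathsf{n}(q),\mathsf{d}(q)$ are the positive coprime integers with $q = \mathsf{n}(q)/\mathsf{d}(q)$. $S_r$ is the additive submonoid of $(\mathbb{Q}_{\ge 0},+)$ generated by $\{r^n : n \in \mathbb{N}_0\}$; it is atomic exactly when $r=1$ or $\mathsf{n}(r)>1$, and $1$ is always an atom of $S_r$ when atomic. For $x,y \in S_r$, $x \mid_{S_r} y$ means $y = x + w$ for some $w \in S_r$. For $x \in S_r \setminus\{0\}$, $\omega(x)$ is the smallest $n \in \mathbb{N}$ such that whenever $x \mid_{S_r} a_1 + \dots + a_t$ for atoms $a_1, \dots, a_t$, there is $T \subseteq \{1,\dots,t\}$ with $|T| \le n$ and $x \mid_{S_r} \sum_{i \in T} a_i$; if no such $n$ exists, $\omega(x) = \infty$. *)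

theory Defs
  imports Complex_Main "HOL-Library.Extended_Nat"
begin

inductive_set Sr :: "rat \<Rightarrow> rat set" for r :: rat where
  zero: "0 \<in> Sr r"
| add_pow: "x \<in> Sr r \<Longrightarrow> x + r ^ n \<in> Sr r"

definition num_r :: "rat \<Rightarrow> int" where "num_r q = fst (quotient_of q)"
definition den_r :: "rat \<Rightarrow> int" where "den_r q = snd (quotient_of q)"

definition atom_Sr :: "rat \<Rightarrow> rat \<Rightarrow> bool" where
  "atom_Sr r a \<longleftrightarrow> a \<in> Sr r \<and> a \<noteq> 0 \<and>
     (\<forall>u \<in> Sr r. \<forall>v \<in> Sr r. a = u + v \<longrightarrow> u = 0 \<or> v = 0)"

definition atomic_Sr :: "rat \<Rightarrow> bool" where
  "atomic_Sr r \<longleftrightarrow> (\<forall>x \<in> Sr r. x \<noteq> 0 \<longrightarrow>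
     (\<exists>t (a :: nat \<Rightarrow> rat). (\<forall>i<t. atom_Sr r (a i)) \<and> x = (\<Sum>i<t. a i)))"

definition dvd_Sr :: "rat \<Rightarrow> rat \<Rightarrow> rat \<Rightarrow> bool" where
  "dvd_Sr r x y \<longleftrightarrow> (\<exists>w \<in> Sr r. y = x + w)"

definition omega_bound :: "rat \<Rightarrow> rat \<Rightarrow> nat \<Rightarrow> bool" where
  "omega_bound r x n \<longleftrightarrow>
     (\<forall>t (a :: nat \<Rightarrow> rat). (\<forall>i<t. atom_Sr r (a i)) \<longrightarrow> dvd_Sr r x (\<Sum>i<t. a i) \<longrightarrow>
        (\<exists>T \<subseteq> {..<t}. card T \<le> n \<and> dvd_Sr r x (\<Sum>i\<in>T. a i)))"

text \<open>omega(x): least n \<ge> 1 with the property, \<infinity> if none (Inf {} = \<infinity> in enat).\<close>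
definition omega_Sr :: "rat \<Rightarrow> rat \<Rightarrow> enat" where
  "omega_Sr r x = Inf {enat n | n. n \<ge> 1 \<and> omega_bound r x n}"

end

theory Submission
  imports Defs "HOL-Number_Theory.Cong"
begin

text \<open>
  Every element of S_r is a sum of powers of r, so the atoms are powers of r, and 1 divides x
  iff x - 1 is again such a sum.
  For r < 1, atomicity forces arbitrarily small atoms r^j; d(r)^j copies of one of them add
  up to the integer n(r)^j, which 1 divides, while boundedly many copies stay below 1.
  For r \<in> \<nat>, every atom is a positive integer and hence divisible by 1.
  For r = n/d with d \<ge> 2, carrying d r^(j+1) = n r^j shows that a representation
  \<Sum> m_i r^i with digits m_i < d for i \<ge> 1 has the largest constant coefficient among all
  representations of the same number. So a sum of atoms divisible by 1 contains the atom 1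
  or d equal atoms r^(j+1), whose sum n r^j is divisible by 1; and the d copies of the atom r,
  which add up to n, show that fewer atoms do not suffice.
\<close>

lemma Sr_nonneg: "x \<in> Sr r \<Longrightarrow> 0 \<le> r \<Longrightarrow> 0 \<le> x"
  by (induction x rule: Sr.induct) auto

lemma Sr_add:
  assumes "x \<in> Sr r" "y \<in> Sr r"
  shows "x + y \<in> Sr r"
  using assms(2) by (induction y rule: Sr.induct) (auto simp: add.assoc[symmetric] intro: Sr.add_pow assms(1))

lemma Sr_pow: "r ^ n \<in> Sr r"
  using Sr.add_pow[OF Sr.zero] by simp

lemma Sr_of_nat_mult_pow: "of_nat k * r ^ n \<in> Sr r"
proof (induction k)
  case 0
  show ?case using Sr.zero by simp
next
  case (Suc k)
  then show ?case using Sr.add_pow[of "of_nat k * r ^ n" r n] by (simp add: algebra_simps)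
qed

lemma Sr_of_nat: "of_nat k \<in> Sr r"
  using Sr_of_nat_mult_pow[of k r 0] by simp

lemma sum_pow_coeffs_add_monomial:
  fixes r :: rat
  assumes "p \<le> M"
  shows "(\<Sum>j\<le>M. of_nat (c j) * r ^ j) + of_nat k * r ^ p
       = (\<Sum>j\<le>M. of_nat ((c(p := c p + k)) j) * r ^ j)"
proof -
  have "(\<Sum>j\<le>M. of_nat ((c(p := c p + k)) j) * r ^ j)
      = (\<Sum>j\<le>M. of_nat (c j) * r ^ j + (if j = p then of_nat k * r ^ j else 0))"
    by (rule sum.cong) (auto simp: algebra_simps)
  with assms show ?thesis by (simp add: sum.distrib)
qed

lemma Sr_sum_pow_coeffs:
  "x \<in> Sr r \<Longrightarrow> \<exists>c N. \<forall>M\<ge>N. x = (\<Sum>j\<le>M. of_nat (c j) * r ^ j)"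
proof (induction x rule: Sr.induct)
  case zero
  show ?case by (rule exI[of _ "\<lambda>_. 0"]) simp
next
  case (add_pow x n)
  then obtain c N where x: "\<forall>M\<ge>N. x = (\<Sum>j\<le>M. of_nat (c j) * r ^ j)" by blast
  have "x + r ^ n = (\<Sum>j\<le>M. of_nat ((c(n := c n + 1)) j) * r ^ j)" if "max N n \<le> M" for M
    using that x[rule_format, of M] sum_pow_coeffs_add_monomial[of n M c r 1] by simp
  then show ?case by blast
qed

lemma sum_pow_eq_sum_count:
  fixes r :: rat and e :: "nat \<Rightarrow> nat" and t N :: nat
  assumes "\<forall>i<t. e i \<le> N"
  shows "(\<Sum>i<t. r ^ e i) = (\<Sum>j\<le>N. of_nat (card {i. i < t \<and> e i = j}) * r ^ j)"
proof -
  have "(\<Sum>i<t. r ^ e i) = (\<Sum>j\<le>N. \<Sum>i\<in>{i. i \<in> {..<t} \<and> e i = j}. r ^ e i)"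
    by (rule sum.group[symmetric]) (use assms in auto)
  also have "\<dots> = (\<Sum>j\<le>N. of_nat (card {i. i < t \<and> e i = j}) * r ^ j)"
    by (intro sum.cong) auto
  finally show ?thesis .
qed

lemma atom_Sr_imp_pow:
  assumes "r \<noteq> 0" "atom_Sr r a"
  shows "\<exists>e. a = r ^ e"
proof -
  have "a \<in> Sr r" "a \<noteq> 0" using assms(2) by (auto simp: atom_Sr_def)
  then show ?thesis
  proof cases
    case (add_pow x n)
    then have "x = 0" using assms Sr_pow[of r n] unfolding atom_Sr_def by auto
    with add_pow show ?thesis by auto
  qed simp
qed

lemma dvd_Sr_one_iff: "dvd_Sr r 1 y \<longleftrightarrow> y - 1 \<in> Sr r"
  unfolding dvd_Sr_def by (auto intro!: bexI[of _ "y - 1"])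

lemma dvd_Sr_one_imp_ge: "0 \<le> r \<Longrightarrow> dvd_Sr r 1 y \<Longrightarrow> 1 \<le> y"
  using Sr_nonneg by (fastforce simp: dvd_Sr_one_iff)

lemma dvd_Sr_one_of_nat: "1 \<le> k \<Longrightarrow> dvd_Sr r 1 (of_nat k)"
  using Sr_of_nat[of "k - 1" r] by (simp add: dvd_Sr_one_iff of_nat_diff)

lemma dvd_Sr_one_add: "dvd_Sr r 1 x \<Longrightarrow> y \<in> Sr r \<Longrightarrow> dvd_Sr r 1 (x + y)"
  using Sr_add by (fastforce simp: dvd_Sr_one_iff diff_add_eq[symmetric])

lemma Sr_dvd_Sr_one_or_ge:
  assumes "1 \<le> r" "x \<in> Sr r" "x \<noteq> 0"
  shows "dvd_Sr r 1 x \<or> r \<le> x"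
  using assms(2,3)
proof cases
  case (add_pow y n)
  show ?thesis
  proof (cases n)
    case 0
    then show ?thesis using add_pow by (simp add: dvd_Sr_one_iff)
  next
    case (Suc m)
    then have "r \<le> r ^ n" using assms(1) by (simp add: power_increasing[of 1, simplified])
    with add_pow assms(1) show ?thesis using Sr_nonneg[of y r] by simp
  qed
qed simp

lemma omega_Sr_eq_enat:
  assumes "1 \<le> n" "omega_bound r x n" "\<And>k. 1 \<le> k \<Longrightarrow> k < n \<Longrightarrow> \<not> omega_bound r x k"
  shows "omega_Sr r x = enat n"
  unfolding omega_Sr_def
proof (rule antisym)
  show "Inf {enat k |k. 1 \<le> k \<and> omega_bound r x k} \<le> enat n"
    using assms(1,2) by (intro Inf_lower) auto
  show "enat n \<le> Inf {enat k |k. 1 \<le> k \<and> omega_bound r x k}"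
    using assms(3) by (intro Inf_greatest) (auto simp: not_less[symmetric])
qed

lemma omega_Sr_eq_infinity:
  assumes "\<And>n. 1 \<le> n \<Longrightarrow> \<not> omega_bound r x n"
  shows "omega_Sr r x = \<infinity>"
proof -
  have empty: "{enat k |k. 1 \<le> k \<and> omega_bound r x k} = {}" using assms by auto
  show ?thesis unfolding omega_Sr_def empty by (simp add: top_enat_def)
qed

lemma pos_rat_obtain_num_den:
  fixes r :: rat
  assumes "0 < r"
  obtains n d :: nat where "r = of_nat n / of_nat d" "coprime n d" "0 < n" "0 < d"
    "nat (den_r r) = d"
proof -
  obtain p q where pq: "quotient_of r = (p, q)" by fastforce
  have q: "0 < q" and r: "r = of_int p / of_int q" and cop: "coprime p q"
    using quotient_of_denom_pos[OF pq] quotient_of_div[OF pq] quotient_of_coprime[OF pq] .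
  have p: "0 < p" using assms q r by (simp add: zero_less_divide_iff)
  show ?thesis
  proof (rule that[of "nat p" "nat q"])
    show "r = of_nat (nat p) / of_nat (nat q)" using r p q by simp
    show "coprime (nat p) (nat q)" using cop p q by (simp add: coprime_int_iff[symmetric])
    show "nat (den_r r) = nat q" by (simp add: den_r_def pq)
  qed (use p q in auto)
qed

subsection \<open>Bases \<open>r < 1\<close>\<close>

lemma rat_exists_pow_lt:
  fixes x e :: rat
  assumes "x < 1" "0 < e"
  shows "\<exists>K. x ^ K < e"
proof -
  have "real_of_rat x < 1" "0 < real_of_rat e" using assms by (simp_all add: of_rat_less_1_iff)
  then obtain K where "real_of_rat x ^ K < real_of_rat e"
    using real_arch_pow_inv by blast
  then show ?thesis by (metis of_rat_less of_rat_power)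
qed

lemma atomic_Sr_small_atom:
  fixes r :: rat
  assumes "0 < r" "r < 1" "atomic_Sr r"
  shows "\<exists>j\<ge>K. atom_Sr r (r ^ j)"
proof -
  obtain t and a :: "nat \<Rightarrow> rat" where atoms: "\<forall>i<t. atom_Sr r (a i)" and sum: "r ^ K = (\<Sum>i<t. a i)"
    using assms(1,3) Sr_pow[of r K] unfolding atomic_Sr_def by fastforce
  have "t \<noteq> 0"
  proof
    assume "t = 0"
    with sum assms(1) show False by simp
  qed
  then have "atom_Sr r (a 0)" using atoms by simp
  then obtain j where j: "a 0 = r ^ j" using atom_Sr_imp_pow[of r "a 0"] assms(1) by auto
  have "a 0 \<le> r ^ K"
    unfolding sum using \<open>t \<noteq> 0\<close> atoms assms(1)
    by (intro member_le_sum) (auto simp: atom_Sr_def intro: Sr_nonneg)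
  then have "K \<le> j" using j assms(1,2) by (metis not_le power_strict_decreasing)
  with \<open>atom_Sr r (a 0)\<close> j show ?thesis by auto
qed

lemma not_omega_bound_of_small_atom:
  fixes r :: rat
  assumes "0 < r" "atom_Sr r (r ^ j)" "of_nat k * r ^ j < 1"
  shows "\<not> omega_bound r 1 k"
proof
  assume bound: "omega_bound r 1 k"
  obtain n d :: nat where r: "r = of_nat n / of_nat d" and "0 < n" "0 < d"
    using pos_rat_obtain_num_den[OF assms(1)] by metis
  then have "(\<Sum>i<d ^ j. r ^ j) = of_nat (n ^ j)" by (simp add: power_divide)
  then have "dvd_Sr r 1 (\<Sum>i<d ^ j. r ^ j)" using dvd_Sr_one_of_nat[of "n ^ j" r] \<open>0 < n\<close> by simp
  then obtain T :: "nat set" where "card T \<le> k" "dvd_Sr r 1 (of_nat (card T) * r ^ j)"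
    using bound[unfolded omega_bound_def, rule_format, of "d ^ j" "\<lambda>_. r ^ j"] assms(2) by auto
  then have "1 \<le> of_nat (card T) * r ^ j" using dvd_Sr_one_imp_ge[of r] assms(1) by (meson less_imp_le)
  also have "\<dots> \<le> of_nat k * r ^ j" using \<open>card T \<le> k\<close> assms(1) by (simp add: mult_right_mono)
  finally show False using assms(3) by simp
qed

lemma omega_Sr_one_lt_one:
  fixes r :: rat
  assumes "0 < r" "r < 1" "atomic_Sr r"
  shows "omega_Sr r 1 = \<infinity>"
proof (rule omega_Sr_eq_infinity)
  fix k :: nat assume "1 \<le> k"
  obtain K where "r ^ K < 1 / of_nat k" using rat_exists_pow_lt[of r "1 / of_nat k"] assms(2) \<open>1 \<le> k\<close> by auto
  then have "of_nat k * r ^ K < 1" using \<open>1 \<le> k\<close> by (simp add: less_divide_eq mult.commute)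
  obtain j where "K \<le> j" "atom_Sr r (r ^ j)" using atomic_Sr_small_atom assms by blast
  then have "r ^ j \<le> r ^ K" using assms(1,2) by (simp add: power_decreasing)
  with \<open>of_nat k * r ^ K < 1\<close> have "of_nat k * r ^ j < 1"
    by (meson le_less_trans mult_left_mono of_nat_0_le_iff)
  then show "\<not> omega_bound r 1 k"
    using not_omega_bound_of_small_atom assms(1) \<open>atom_Sr r (r ^ j)\<close> by blast
qed

subsection \<open>Integral bases\<close>

lemma omega_Sr_one_nat:
  assumes "r = of_nat k" "1 \<le> k"
  shows "omega_Sr r 1 = 1"
  unfolding one_enat_def
proof (rule omega_Sr_eq_enat)
  show "omega_bound r 1 1"
    unfolding omega_bound_def
  proof (intro allI impI)
    fix t and a :: "nat \<Rightarrow> rat"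
    assume atoms: "\<forall>i<t. atom_Sr r (a i)" and "dvd_Sr r 1 (\<Sum>i<t. a i)"
    then have "1 \<le> (\<Sum>i<t. a i)" using dvd_Sr_one_imp_ge[of r] assms by simp
    then have "t \<noteq> 0" by (intro notI) simp
    then obtain e where "a 0 = of_nat (k ^ e)"
      using atom_Sr_imp_pow[of r "a 0"] atoms assms by auto
    then have "dvd_Sr r 1 (a 0)" using assms(2) dvd_Sr_one_of_nat[of "k ^ e" r] by simp
    then show "\<exists>T\<subseteq>{..<t}. card T \<le> 1 \<and> dvd_Sr r 1 (\<Sum>i\<in>T. a i)"
      using \<open>t \<noteq> 0\<close> by (intro exI[of _ "{0}"]) auto
  qed
qed auto

subsection \<open>Bases \<open>n/d\<close> in lowest terms\<close>

locale fraction_base =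
  fixes n d :: nat and r :: rat
  assumes coprime: "coprime n d" and den_pos: "0 < d" and r_def: "r = of_nat n / of_nat d"
begin

lemma den_mult_pow_Suc: "of_nat d * r ^ Suc j = of_nat n * r ^ j"
  using den_pos by (simp add: r_def)

lemma sum_pow_coeffs_times_den_pow:
  "(\<Sum>i\<le>K. of_nat (f i) * r ^ i) * of_nat d ^ K = of_nat (\<Sum>i\<le>K. f i * n ^ i * d ^ (K - i))"
proof -
  have coeff_eq: "of_nat (f i) * r ^ i * of_nat d ^ K = of_nat (f i * n ^ i * d ^ (K - i))" if "i \<le> K" for i
  proof -
    have "(of_nat d :: rat) ^ K = of_nat d ^ i * of_nat d ^ (K - i)"
      using that by (simp flip: power_add)
    then show ?thesis using den_pos by (simp add: r_def power_divide)
  qed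
  have "(\<Sum>i\<le>K. of_nat (f i) * r ^ i) * of_nat d ^ K = (\<Sum>i\<le>K. of_nat (f i) * r ^ i * of_nat d ^ K)"
    by (simp add: sum_distrib_right)
  also have "\<dots> = (\<Sum>i\<le>K. of_nat (f i * n ^ i * d ^ (K - i)))"
    by (rule sum.cong) (simp_all add: coeff_eq)
  finally show ?thesis by simp
qed

lemma top_coeff_cong:
  assumes "(\<Sum>i\<le>Suc N. of_nat (f i) * r ^ i) = (\<Sum>i\<le>Suc N. of_nat (g i) * r ^ i)"
  shows "[f (Suc N) = g (Suc N)] (mod d)"
proof -
  define K where "K = Suc N"
  have top: "[(\<Sum>i\<le>K. h i * n ^ i * d ^ (K - i)) = h K * n ^ K] (mod d)" for h
  proof -
    have "d dvd (\<Sum>i\<le>N. h i * n ^ i * d ^ (K - i))"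
      by (intro dvd_sum) (simp add: K_def Suc_diff_le)
    then show ?thesis by (simp add: K_def cong_add_rcancel_0_nat cong_0_iff)
  qed
  have "(of_nat (\<Sum>i\<le>K. f i * n ^ i * d ^ (K - i)) :: rat) = of_nat (\<Sum>i\<le>K. g i * n ^ i * d ^ (K - i))"
    unfolding sum_pow_coeffs_times_den_pow[symmetric] K_def assms ..
  then have "(\<Sum>i\<le>K. f i * n ^ i * d ^ (K - i)) = (\<Sum>i\<le>K. g i * n ^ i * d ^ (K - i))"
    by (simp only: of_nat_eq_iff)
  then have "[f K * n ^ K = g K * n ^ K] (mod d)"
    using top[of f] top[of g] by (simp add: cong_def)
  moreover have "coprime (n ^ K) d" using coprime by simp
  ultimately show ?thesis by (simp add: K_def cong_mult_rcancel_nat)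
qed

text \<open>
  Induction on N: the top coefficients of m and c agree modulo d, and carrying the surplus of c
  down via d r^(N+1) = n r^N only increases its lower coefficients.
\<close>

lemma canonical_coeff0_ge:
  "(\<forall>i\<in>{1..N}. m i < d) \<Longrightarrow> (\<Sum>i\<le>N. of_nat (m i) * r ^ i) = (\<Sum>i\<le>N. of_nat (c i) * r ^ i)
    \<Longrightarrow> c 0 \<le> m 0"
proof (induction N arbitrary: c)
  case 0
  then show ?case by simp
next
  case (Suc N c)
  define q where "q = c (Suc N) div d"
  have "[m (Suc N) = c (Suc N)] (mod d)" using top_coeff_cong[OF Suc.prems(2)] .
  then have cq: "c (Suc N) = m (Suc N) + d * q"
    using Suc.prems(1) by (simp add: q_def cong_def)
  define c' where "c' = c(N := c N + q * n)"
  have "(\<Sum>i\<le>N. of_nat (m i) * r ^ i) + of_nat (m (Suc N)) * r ^ Suc N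
      = (\<Sum>i\<le>N. of_nat (c i) * r ^ i) + of_nat (c (Suc N)) * r ^ Suc N"
    using Suc.prems(2) by simp
  then have "(\<Sum>i\<le>N. of_nat (m i) * r ^ i) = (\<Sum>i\<le>N. of_nat (c i) * r ^ i) + of_nat q * (of_nat d * r ^ Suc N)"
    by (simp add: cq algebra_simps)
  also have "\<dots> = (\<Sum>i\<le>N. of_nat (c i) * r ^ i) + of_nat (q * n) * r ^ N"
    by (subst den_mult_pow_Suc) (simp add: ac_simps)
  also have "\<dots> = (\<Sum>i\<le>N. of_nat (c' i) * r ^ i)"
    unfolding c'_def by (rule sum_pow_coeffs_add_monomial) simp
  finally have "c' 0 \<le> m 0" using Suc.IH Suc.prems(1) by auto
  then show ?case by (simp add: c'_def split: if_splits)
qed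

lemma not_dvd_Sr_one_canonical:
  assumes "\<forall>i\<in>{1..N}. m i < d" "m 0 = 0"
  shows "\<not> dvd_Sr r 1 (\<Sum>i\<le>N. of_nat (m i) * r ^ i)"
proof
  define x where "x = (\<Sum>i\<le>N. of_nat (m i) * r ^ i)"
  assume "dvd_Sr r 1 (\<Sum>i\<le>N. of_nat (m i) * r ^ i)"
  then obtain c N' where c: "\<forall>M\<ge>N'. x - 1 = (\<Sum>j\<le>M. of_nat (c j) * r ^ j)"
    using Sr_sum_pow_coeffs by (fastforce simp: dvd_Sr_one_iff x_def)
  define M where "M = max N N'"
  define m' where "m' i = (if i \<le> N then m i else 0)" for i
  have "x = (\<Sum>i\<le>M. of_nat (m' i) * r ^ i)"
    unfolding x_def m'_def M_def by (intro sum.mono_neutral_cong_left) auto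
  moreover have "x = (\<Sum>j\<le>M. of_nat (c j) * r ^ j) + of_nat 1 * r ^ 0"
    using c[rule_format, of M] by (simp add: M_def diff_eq_eq)
  ultimately have "(\<Sum>i\<le>M. of_nat (m' i) * r ^ i) = (\<Sum>j\<le>M. of_nat ((c(0 := c 0 + 1)) j) * r ^ j)"
    using sum_pow_coeffs_add_monomial[of 0 M c r 1] by simp
  moreover have "\<forall>i\<in>{1..M}. m' i < d" using assms(1) den_pos by (auto simp: m'_def)
  ultimately have "(c(0 := c 0 + 1)) 0 \<le> m' 0" by (intro canonical_coeff0_ge) auto
  then show False using assms(2) by (simp add: m'_def)
qed

lemma not_dvd_Sr_one_mult_r: "k < d \<Longrightarrow> \<not> dvd_Sr r 1 (of_nat k * r)"
  using not_dvd_Sr_one_canonical[of 1 "\<lambda>i. if i = 1 then k else 0"] by simp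

lemma dvd_Sr_one_sum_pow_cases:
  fixes e :: "nat \<Rightarrow> nat" and t :: nat
  assumes "dvd_Sr r 1 (\<Sum>i<t. r ^ e i)"
  shows "(\<exists>i<t. e i = 0) \<or> (\<exists>j. d \<le> card {i. i < t \<and> e i = j})"
proof (rule ccontr)
  define M where "M = (\<Sum>i<t. e i)"
  define m where "m j = card {i. i < t \<and> e i = j}" for j
  assume "\<not> ?thesis"
  then have "\<forall>i\<in>{1..M}. m i < d" "m 0 = 0" by (auto simp: m_def not_le card_eq_0_iff)
  then have "\<not> dvd_Sr r 1 (\<Sum>j\<le>M. of_nat (m j) * r ^ j)" by (rule not_dvd_Sr_one_canonical)
  moreover have "\<forall>i<t. e i \<le> M" unfolding M_def by (auto intro: member_le_sum)
  then have "(\<Sum>i<t. r ^ e i) = (\<Sum>j\<le>M. of_nat (m j) * r ^ j)"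
    unfolding m_def by (rule sum_pow_eq_sum_count)
  ultimately show False using assms by simp
qed

end

locale non_integral_base = fraction_base +
  assumes den_gt_1: "1 < d" and den_lt_num: "d < n"
begin

lemma one_lt_r: "1 < r"
  using den_lt_num den_gt_1 by (simp add: r_def)

lemma dvd_Sr_one_num_mult_pow: "dvd_Sr r 1 (of_nat n * r ^ j)"
proof (induction j)
  case 0
  show ?case using den_lt_num by (simp add: dvd_Sr_one_of_nat)
next
  case (Suc j)
  have "of_nat n * r ^ Suc j = of_nat n * r ^ j + of_nat (n - d) * r ^ Suc j"
    using den_lt_num den_mult_pow_Suc[of j] by (simp add: of_nat_diff algebra_simps)
  then show ?case using dvd_Sr_one_add[OF Suc Sr_of_nat_mult_pow] by metis
qed

lemma atom_Sr_r: "atom_Sr r r"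
  unfolding atom_Sr_def
proof (intro conjI ballI impI)
  show "r \<in> Sr r" using Sr_pow[of r 1] by simp
  show "r \<noteq> 0" using one_lt_r by simp
  fix u v assume uv: "u \<in> Sr r" "v \<in> Sr r" "r = u + v"
  have "\<not> dvd_Sr r 1 r" using not_dvd_Sr_one_mult_r[of 1] den_gt_1 by simp
  then have "\<not> dvd_Sr r 1 u" "\<not> dvd_Sr r 1 v"
    using uv dvd_Sr_one_add[of r u v] dvd_Sr_one_add[of r v u] by (auto simp: add.commute)
  then show "u = 0 \<or> v = 0"
    using uv Sr_dvd_Sr_one_or_ge[of r u] Sr_dvd_Sr_one_or_ge[of r v] one_lt_r by fastforce
qed

lemma omega_bound_den: "omega_bound r 1 d"
  unfolding omega_bound_def
proof (intro allI impI)
  fix t and a :: "nat \<Rightarrow> rat"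
  assume "\<forall>i<t. atom_Sr r (a i)" and dvd: "dvd_Sr r 1 (\<Sum>i<t. a i)"
  then have "\<forall>i<t. \<exists>k. a i = r ^ k" using atom_Sr_imp_pow one_lt_r by simp
  then obtain e where e: "\<forall>i<t. a i = r ^ e i" by metis
  have "(\<Sum>i<t. a i) = (\<Sum>i<t. r ^ e i)" using e by (intro sum.cong) auto
  then have "(\<exists>i<t. e i = 0) \<or> (\<exists>j. d \<le> card {i. i < t \<and> e i = j})"
    using dvd by (intro dvd_Sr_one_sum_pow_cases) simp
  then show "\<exists>T\<subseteq>{..<t}. card T \<le> d \<and> dvd_Sr r 1 (\<Sum>i\<in>T. a i)"
  proof (elim disjE exE conjE)
    fix i assume "i < t" "e i = 0"
    then show ?thesis
      using e den_gt_1 by (intro exI[of _ "{i}"]) (simp add: dvd_Sr_one_of_nat[of 1, simplified])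
  next
    fix j assume "d \<le> card {i. i < t \<and> e i = j}"
    then obtain T where T: "T \<subseteq> {i. i < t \<and> e i = j}" "card T = d"
      by (meson obtain_subset_with_card_n)
    then have "(\<Sum>i\<in>T. a i) = of_nat d * r ^ j" using e by (simp add: subset_eq)
    moreover have "dvd_Sr r 1 (of_nat d * r ^ j)"
    proof (cases j)
      case 0
      then show ?thesis using den_gt_1 by (simp add: dvd_Sr_one_of_nat)
    next
      case (Suc j')
      then show ?thesis using dvd_Sr_one_num_mult_pow[of j'] by (simp only: den_mult_pow_Suc)
    qed
    ultimately show ?thesis using T by auto
  qed
qed

lemma not_omega_bound_below_den:
  assumes "k < d"
  shows "\<not> omega_bound r 1 k"
proof
  assume bound: "omega_bound r 1 k"
  have "dvd_Sr r 1 (\<Sum>i<d. r)"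
    using den_gt_1 den_lt_num by (simp add: r_def dvd_Sr_one_of_nat)
  then obtain T :: "nat set" where "card T \<le> k" "dvd_Sr r 1 (of_nat (card T) * r)"
    using bound[unfolded omega_bound_def, rule_format, of d "\<lambda>_. r"] atom_Sr_r by auto
  then show False using not_dvd_Sr_one_mult_r[of "card T"] assms by simp
qed

lemma omega_Sr_one_eq_den: "omega_Sr r 1 = enat d"
  using omega_Sr_eq_enat omega_bound_den not_omega_bound_below_den den_gt_1 by simp

end

theorem proposition5p3:
  fixes r :: rat
  assumes "r > 0" and "atomic_Sr r"
  shows "(r < 1 \<longrightarrow> omega_Sr r 1 = \<infinity>)
       \<and> (r \<in> \<nat> \<longrightarrow> omega_Sr r 1 = 1)
       \<and> (r > 1 \<and> r \<notin> \<nat> \<longrightarrow> omega_Sr r 1 = enat (nat (den_r r)))"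
proof (intro conjI impI)
  assume "r < 1"
  then show "omega_Sr r 1 = \<infinity>" using omega_Sr_one_lt_one assms by blast
next
  assume "r \<in> \<nat>"
  then obtain k where k: "r = of_nat k" by (auto elim: Nats_cases)
  with assms(1) have "1 \<le> k" by simp
  with k show "omega_Sr r 1 = 1" by (rule omega_Sr_one_nat)
next
  assume r: "1 < r \<and> r \<notin> \<nat>"
  obtain n d :: nat where nd: "r = of_nat n / of_nat d" "coprime n d" "0 < d" "nat (den_r r) = d"
    using pos_rat_obtain_num_den[OF assms(1)] by metis
  have "d \<noteq> 1" using r nd(1) by auto
  moreover have "d < n" using r nd(1,3) by (simp add: less_divide_eq_1)
  ultimately interpret non_integral_base n d r using nd by unfold_locales auto
  show "omega_Sr r 1 = enat (nat (den_r r))" using omega_Sr_one_eq_den nd(4) by simp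
qed

end
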